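(* Let $R=\mathbb{Z}$ or $\mathbb{Z}[i]$, $1\leq k<n$, and let $A_0=(a_1|\dots|a_k)\in R^{n\times k}$ be a $k$-icube of norm $\lambda$ with $a_1$ primitive. Let $b_{k+1},\dots,b_n$ be an $R$-basis of $\Lambda=\{w\in R^n: a_j^*w=0,\ 1\leq j\leq k\}$ and $B=(a_1|\dots|a_k|b_{k+1}|\dots|b_n)$. Let $a=(\alpha_1,\dots,\alpha_n)^T$ with $\alpha_j=\overline{(-1)^{j+1}\det B_{j,1}}$, where $B_{j,1}$ is the matrix obtained from $B$ by deleting row $j$ and column $1$. Then $\overline{\det B}/\lambda\in R$ and $a=(\overline{\det B}/\lambda)\,a_1$.
   Context: A $k$-icube of norm $\lambda>0$ in $R^n$ is $(v_1|\dots|v_k)\in R^{n\times k}$ with $v_i^*v_j=\lambda$ if $i=j$ and $0$ otherwise. A vector is primitive if its entries have no common non-unit divisor in $R$. *)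

theory Defs
  imports Complex_Main "Jordan_Normal_Form.Determinant"
begin

definition rational_integers :: "complex set" where
  "rational_integers = {z. \<exists>m::int. z = of_int m}"

definition gaussian_integers :: "complex set" where
  "gaussian_integers = {z. \<exists>m l::int. z = of_int m + \<i> * of_int l}"

definition cinner :: "complex vec \<Rightarrow> complex vec \<Rightarrow> complex" where
  "cinner v w = (\<Sum>i<dim_vec v. cnj (v $ i) * w $ i)"

definition vec_in :: "complex set \<Rightarrow> nat \<Rightarrow> complex vec \<Rightarrow> bool" where
  "vec_in R n v \<longleftrightarrow> dim_vec v = n \<and> (\<forall>i<n. v $ i \<in> R)"

definition icube :: "complex set \<Rightarrow> nat \<Rightarrow> nat \<Rightarrow> real \<Rightarrow> complex mat \<Rightarrow> bool" where
  "icube R n k lam A \<longleftrightarrow> lam > 0 \<and> A \<in> carrier_mat n k \<and> (\<forall>i<n. \<forall>j<k. A $$ (i,j) \<in> R) \<and>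
     (\<forall>i<k. \<forall>j<k. cinner (col A i) (col A j) = (if i = j then complex_of_real lam else 0))"

definition primitive :: "complex set \<Rightarrow> complex vec \<Rightarrow> bool" where
  "primitive R v \<longleftrightarrow> (\<forall>d\<in>R. (\<forall>i<dim_vec v. \<exists>q\<in>R. v $ i = d * q) \<longrightarrow> (\<exists>u\<in>R. d * u = 1))"

definition orth_lattice :: "complex set \<Rightarrow> nat \<Rightarrow> nat \<Rightarrow> complex mat \<Rightarrow> complex vec set" where
  "orth_lattice R n k A = {w. vec_in R n w \<and> (\<forall>j<k. cinner (col A j) w = 0)}"

definition is_R_basis :: "complex set \<Rightarrow> nat \<Rightarrow> nat set \<Rightarrow> (nat \<Rightarrow> complex vec) \<Rightarrow> complex vec set \<Rightarrow> bool" where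
  "is_R_basis R n I b L \<longleftrightarrow>
     (\<forall>j\<in>I. b j \<in> L) \<and>
     (\<forall>c. (\<forall>j\<in>I. c j \<in> R) \<longrightarrow> finsum_vec TYPE(complex) n (\<lambda>j. c j \<cdot>\<^sub>v b j) I = 0\<^sub>v n \<longrightarrow> (\<forall>j\<in>I. c j = 0)) \<and>
     (\<forall>w\<in>L. \<exists>c. (\<forall>j\<in>I. c j \<in> R) \<and> w = finsum_vec TYPE(complex) n (\<lambda>j. c j \<cdot>\<^sub>v b j) I)"

end

(* The vector a of conjugated cofactors of the first column of B satisfies
   a^* v = det (B with its first column replaced by v), so a is orthogonal to a_2, ..., a_k
   and to the b_j, while a_1^* a = conj (det B).  Hence w = lam a - conj (det B) a_1 has entries
   in R and is orthogonal to every a_j, i.e. w lies in Lambda; being also orthogonal to the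
   basis of Lambda, w is orthogonal to itself and vanishes.  Finally R is Euclidean and a_1 is
   primitive, so the integrality of the entries of a = (conj (det B) / lam) a_1 forces
   conj (det B) / lam to lie in R. *)
theory Submission imports Defs begin

definition int_or_gaussian :: "complex set \<Rightarrow> bool" where
  "int_or_gaussian R \<longleftrightarrow> R = rational_integers \<or> R = gaussian_integers"

lemma mem_gaussian_integers_iff: "z \<in> gaussian_integers \<longleftrightarrow> Re z \<in> \<int> \<and> Im z \<in> \<int>"
proof
  assume "z \<in> gaussian_integers"
  then show "Re z \<in> \<int> \<and> Im z \<in> \<int>" unfolding gaussian_integers_def by auto
next
  assume "Re z \<in> \<int> \<and> Im z \<in> \<int>"
  then obtain m l :: int where "Re z = of_int m" "Im z = of_int l" by (metis Ints_cases)
  then have "z = of_int m + \<i> * of_int l" by (simp add: complex_eq_iff)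
  then show "z \<in> gaussian_integers" unfolding gaussian_integers_def by blast
qed

lemma mem_rational_integers_iff: "z \<in> rational_integers \<longleftrightarrow> Re z \<in> \<int> \<and> Im z = 0"
proof
  assume "z \<in> rational_integers"
  then show "Re z \<in> \<int> \<and> Im z = 0" unfolding rational_integers_def by auto
next
  assume "Re z \<in> \<int> \<and> Im z = 0"
  then obtain m :: int where "Re z = of_int m" "Im z = 0" by (metis Ints_cases)
  then have "z = of_int m" by (simp add: complex_eq_iff)
  then show "z \<in> rational_integers" unfolding rational_integers_def by blast
qed

lemma int_or_gaussian_mem_iff:
  "int_or_gaussian R \<Longrightarrow>
     z \<in> R \<longleftrightarrow> Re z \<in> \<int> \<and> Im z \<in> \<int> \<and> (R = rational_integers \<longrightarrow> Im z = 0)"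
  unfolding int_or_gaussian_def by (metis Ints_0 mem_gaussian_integers_iff mem_rational_integers_iff)

definition gauss_norm :: "complex \<Rightarrow> nat" where
  "gauss_norm z = nat \<lfloor>(Re z)\<^sup>2 + (Im z)\<^sup>2\<rfloor>"

context
  fixes R :: "complex set"
  assumes R: "int_or_gaussian R"
begin

lemma int_or_gaussian_add: "x \<in> R \<Longrightarrow> y \<in> R \<Longrightarrow> x + y \<in> R"
  and int_or_gaussian_diff: "x \<in> R \<Longrightarrow> y \<in> R \<Longrightarrow> x - y \<in> R"
  and int_or_gaussian_mult: "x \<in> R \<Longrightarrow> y \<in> R \<Longrightarrow> x * y \<in> R"
  and int_or_gaussian_cnj: "x \<in> R \<Longrightarrow> cnj x \<in> R"
  and int_or_gaussian_of_int: "of_int m \<in> R"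
  and int_or_gaussian_0: "0 \<in> R"
  and int_or_gaussian_1: "1 \<in> R"
  using R by (simp_all add: int_or_gaussian_mem_iff)

lemma int_or_gaussian_sum: "(\<And>x. x \<in> A \<Longrightarrow> f x \<in> R) \<Longrightarrow> sum f A \<in> R"
  by (induction A rule: infinite_finite_induct) (auto simp: int_or_gaussian_0 int_or_gaussian_add)

lemma int_or_gaussian_prod: "(\<And>x. x \<in> A \<Longrightarrow> f x \<in> R) \<Longrightarrow> prod f A \<in> R"
  by (induction A rule: infinite_finite_induct) (auto simp: int_or_gaussian_1 int_or_gaussian_mult)

lemma int_or_gaussian_det:
  assumes "\<And>i j. i < dim_row A \<Longrightarrow> j < dim_col A \<Longrightarrow> A $$ (i, j) \<in> R"
  shows "det A \<in> R"
proof -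
  have "signof p \<in> R" for p :: "nat \<Rightarrow> nat"
    using int_or_gaussian_of_int[of 1] int_or_gaussian_of_int[of "-1"] by (simp add: sign_def)
  then show ?thesis unfolding det_def using assms
    by (auto intro!: int_or_gaussian_sum int_or_gaussian_mult int_or_gaussian_prod
             simp: int_or_gaussian_0 permutes_def)
qed

lemma int_or_gaussian_cinner: "vec_in R n x \<Longrightarrow> vec_in R n y \<Longrightarrow> cinner x y \<in> R"
  unfolding cinner_def vec_in_def
  by (auto intro!: int_or_gaussian_sum int_or_gaussian_mult int_or_gaussian_cnj)

lemma int_or_gaussian_cofactor:
  assumes "A \<in> carrier_mat n n" "\<And>i j. i < n \<Longrightarrow> j < n \<Longrightarrow> A $$ (i, j) \<in> R"
  shows "cofactor A i j \<in> R"
proof -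
  have "(-1) ^ (i + j) = (of_int ((-1) ^ (i + j)) :: complex)" by simp
  then have "(-1) ^ (i + j) \<in> R" by (metis int_or_gaussian_of_int)
  moreover have "det (mat_delete A i j) \<in> R"
    using assms by (intro int_or_gaussian_det) (auto simp: mat_delete_def)
  ultimately show ?thesis unfolding cofactor_def by (rule int_or_gaussian_mult)
qed

lemma gauss_norm_less:
  assumes "r \<in> R" "d \<in> R" "cmod r < cmod d"
  shows "gauss_norm r < gauss_norm d"
proof -
  obtain a b c e :: int where ab: "Re r = a" "Im r = b" "Re d = c" "Im d = e"
    using R assms(1,2) by (metis int_or_gaussian_mem_iff Ints_cases)
  have "(cmod r)\<^sup>2 < (cmod d)\<^sup>2" using assms(3) by (simp add: power_strict_mono)
  then have "(Re r)\<^sup>2 + (Im r)\<^sup>2 < (Re d)\<^sup>2 + (Im d)\<^sup>2" by (simp add: cmod_power2)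
  then have "a\<^sup>2 + b\<^sup>2 < c\<^sup>2 + e\<^sup>2" using ab by (metis of_int_add of_int_less_iff of_int_power)
  moreover have "gauss_norm r = nat (a\<^sup>2 + b\<^sup>2)" "gauss_norm d = nat (c\<^sup>2 + e\<^sup>2)"
    unfolding gauss_norm_def using ab by (metis floor_of_int of_int_add of_int_power)+
  moreover have "0 \<le> a\<^sup>2 + b\<^sup>2" by simp
  ultimately show ?thesis by (metis nat_less_eq_zless)
qed

lemma int_or_gaussian_division:
  assumes "x \<in> R" "d \<in> R" "d \<noteq> 0"
  obtains q where "q \<in> R" "cmod (x - q * d) < cmod d"
proof -
  define z where "z = x / d"
  define q where "q = of_int (round (Re z)) + \<i> * of_int (round (Im z))"
  have "R = rational_integers \<Longrightarrow> Im z = 0"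
    using R assms by (auto simp: z_def int_or_gaussian_mem_iff Im_divide)
  then have "q \<in> R" using R by (auto simp: int_or_gaussian_mem_iff q_def)
  have "\<bar>Re z - Re q\<bar> \<le> 1/2" "\<bar>Im z - Im q\<bar> \<le> 1/2"
    unfolding q_def using of_int_round_abs_le[of "Re z"] of_int_round_abs_le[of "Im z"]
    by (simp_all add: abs_minus_commute)
  then have "(cmod (z - q))\<^sup>2 \<le> (1/2)\<^sup>2 + (1/2)\<^sup>2"
    unfolding cmod_power2 by (intro add_mono; simp add: abs_le_square_iff[symmetric])
  then have "(cmod (z - q))\<^sup>2 < 1\<^sup>2" by (simp add: power2_eq_square)
  then have "cmod (z - q) < 1" using power2_less_imp_less by fastforce
  moreover have "x - q * d = d * (z - q)" using assms(3) by (simp add: z_def field_simps)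
  ultimately have "cmod (x - q * d) < cmod d" using assms(3) by (simp add: norm_mult)
  with \<open>q \<in> R\<close> show thesis by (rule that)
qed

lemma primitive_has_nonzero_entry:
  assumes "primitive R v"
  shows "\<exists>i<dim_vec v. v $ i \<noteq> 0"
proof (rule ccontr)
  assume "\<not> ?thesis"
  then have "\<forall>i<dim_vec v. \<exists>q\<in>R. v $ i = 0 * q" using int_or_gaussian_0 by auto
  then show False using assms int_or_gaussian_0 unfolding primitive_def by fastforce
qed

text \<open>The denominators \<open>d \<in> R\<close> of \<open>t\<close> form an ideal containing all entries of \<open>v\<close>; by
  Euclidean division its nonzero element of least norm divides all of them, hence is a unit.\<close>
lemma primitive_multiple_mem:
  assumes prim: "primitive R v" and vR: "\<And>i. i < dim_vec v \<Longrightarrow> v $ i \<in> R"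
    and tv: "\<And>i. i < dim_vec v \<Longrightarrow> t * v $ i \<in> R"
  shows "t \<in> R"
proof -
  define denom where "denom d \<longleftrightarrow> d \<in> R \<and> t * d \<in> R \<and> d \<noteq> 0" for d
  obtain i0 where "i0 < dim_vec v" "v $ i0 \<noteq> 0" using primitive_has_nonzero_entry[OF prim] by blast
  then have "denom (v $ i0)" unfolding denom_def using vR tv by blast
  then obtain d where d: "denom d" and least: "\<And>d'. denom d' \<Longrightarrow> gauss_norm d \<le> gauss_norm d'"
    using ex_has_least_nat[of denom _ gauss_norm] by blast
  have "\<exists>q\<in>R. v $ i = d * q" if i: "i < dim_vec v" for i
  proof -
    obtain q where q: "q \<in> R" "cmod (v $ i - q * d) < cmod d"
      using int_or_gaussian_division[OF vR[OF i]] d unfolding denom_def by blast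
    define r where "r = v $ i - q * d"
    have "r \<in> R" unfolding r_def using vR[OF i] q(1) d
      by (simp add: denom_def int_or_gaussian_diff int_or_gaussian_mult)
    moreover have "t * r = t * v $ i - q * (t * d)" unfolding r_def by (simp add: algebra_simps)
    then have "t * r \<in> R" using tv[OF i] q(1) d
      by (simp add: denom_def int_or_gaussian_diff int_or_gaussian_mult)
    moreover have "gauss_norm r < gauss_norm d"
      using gauss_norm_less \<open>r \<in> R\<close> d q(2) unfolding r_def denom_def by blast
    ultimately have "r = 0" using least[of r] unfolding denom_def by fastforce
    then show ?thesis using q(1) unfolding r_def by (auto simp: mult.commute)
  qed
  then obtain u where "u \<in> R" "d * u = 1" using prim d unfolding primitive_def denom_def by blast
  then have "t = (t * d) * u" by (simp add: mult.assoc)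
  then show ?thesis using d \<open>u \<in> R\<close> unfolding denom_def by (metis int_or_gaussian_mult)
qed

lemma primitive_collinear_quotient_mem:
  assumes prim: "primitive R v" and v: "vec_in R n v" and a: "vec_in R n a"
    and "c \<noteq> 0" and ca: "c \<cdot>\<^sub>v a = d \<cdot>\<^sub>v v"
  shows "d / c \<in> R \<and> a = (d / c) \<cdot>\<^sub>v v"
proof -
  have "c * a $ i = d * v $ i" if "i < n" for i
    using arg_cong[OF ca, of "\<lambda>x. x $ i"] that a v unfolding vec_in_def by simp
  then have a_eq: "a = (d / c) \<cdot>\<^sub>v v"
    using \<open>c \<noteq> 0\<close> a v unfolding vec_in_def by (intro eq_vecI) (simp_all add: field_simps)
  have "d / c \<in> R"
  proof (rule primitive_multiple_mem[OF prim])
    fix i assume i: "i < dim_vec v"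
    then show "v $ i \<in> R" using v unfolding vec_in_def by simp
    have "d / c * v $ i = a $ i" using a_eq i by simp
    then show "d / c * v $ i \<in> R" using a v i unfolding vec_in_def by metis
  qed
  with a_eq show ?thesis by simp
qed

end

lemma cinner_commute: "dim_vec x = dim_vec y \<Longrightarrow> cinner x y = cnj (cinner y x)"
  unfolding cinner_def by (simp add: mult.commute)

lemma cinner_diff_right:
  "dim_vec y = dim_vec x \<Longrightarrow> dim_vec z = dim_vec x \<Longrightarrow> cinner x (y - z) = cinner x y - cinner x z"
  unfolding cinner_def by (simp add: algebra_simps sum_subtractf)

lemma cinner_smult_right: "dim_vec y = dim_vec x \<Longrightarrow> cinner x (c \<cdot>\<^sub>v y) = c * cinner x y"
  unfolding cinner_def by (simp add: algebra_simps sum_distrib_left)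

lemma index_finsum_smult_vec:
  assumes "finite I" "\<And>j. j \<in> I \<Longrightarrow> dim_vec (b j) = n" "i < n"
  shows "finsum_vec TYPE(complex) n (\<lambda>j. c j \<cdot>\<^sub>v b j) I $ i = (\<Sum>j\<in>I. c j * b j $ i)"
proof -
  have "(\<lambda>j. c j \<cdot>\<^sub>v b j) \<in> I \<rightarrow> carrier_vec n" using assms(2) by (auto intro!: carrier_vecI)
  then have "finsum_vec TYPE(complex) n (\<lambda>j. c j \<cdot>\<^sub>v b j) I $ i = (\<Sum>j\<in>I. (c j \<cdot>\<^sub>v b j) $ i)"
    by (rule index_finsum_vec[OF assms(1,3)])
  also have "\<dots> = (\<Sum>j\<in>I. c j * b j $ i)"
    by (rule sum.cong[OF refl]) (simp add: assms)
  finally show ?thesis .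
qed

lemma cinner_finsum_right:
  assumes "finite I" "dim_vec x = n" "\<And>j. j \<in> I \<Longrightarrow> dim_vec (b j) = n"
  shows "cinner x (finsum_vec TYPE(complex) n (\<lambda>j. c j \<cdot>\<^sub>v b j) I) = (\<Sum>j\<in>I. c j * cinner x (b j))"
proof -
  have "cinner x (finsum_vec TYPE(complex) n (\<lambda>j. c j \<cdot>\<^sub>v b j) I) = (\<Sum>i<n. \<Sum>j\<in>I. cnj (x $ i) * (c j * b j $ i))"
    unfolding cinner_def assms(2) sum_distrib_left
    by (rule sum.cong[OF refl]) (simp add: index_finsum_smult_vec assms sum_distrib_left)
  also have "\<dots> = (\<Sum>j\<in>I. c j * cinner x (b j))"
    unfolding cinner_def assms(2) sum_distrib_left by (subst sum.swap) (simp add: algebra_simps)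
  finally show ?thesis .
qed

lemma cinner_self_eq_0: "cinner w w = 0 \<Longrightarrow> w = 0\<^sub>v (dim_vec w)"
proof -
  assume "cinner w w = 0"
  then have "(\<Sum>i<dim_vec w. complex_of_real ((cmod (w $ i))\<^sup>2)) = 0"
    unfolding cinner_def by (simp add: complex_norm_square mult.commute del: of_real_power)
  then have "(\<Sum>i<dim_vec w. (cmod (w $ i))\<^sup>2) = 0"
    by (metis of_real_eq_0_iff of_real_sum)
  then have "\<forall>i\<in>{..<dim_vec w}. (cmod (w $ i))\<^sup>2 = 0"
    by (subst sum_nonneg_eq_0_iff[symmetric]) auto
  then show ?thesis by (intro eq_vecI) auto
qed

lemma cinner_col_conj_cofactors:
  assumes B: "B \<in> carrier_mat n n" and "l < n" "m < n"
  shows "cinner (col B m) (vec n (\<lambda>i. cnj (cofactor B i l))) = (if m = l then cnj (det B) else 0)"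
proof -
  have "cnj (cinner (col B m) (vec n (\<lambda>i. cnj (cofactor B i l)))) = (adj_mat B * B) $$ (l, m)"
    using assms unfolding cinner_def adj_mat_def
    by (auto intro!: sum.cong simp: scalar_prod_def atLeast0LessThan mult.commute)
  also have "\<dots> = (if m = l then det B else 0)"
    using assms adj_mat(3)[OF B] by simp
  finally show ?thesis by (metis complex_cnj_cnj complex_cnj_zero)
qed

lemma finsum_vec_orthogonal_eq_0:
  assumes "finite I" "\<And>j. j \<in> I \<Longrightarrow> dim_vec (b j) = n"
    and w: "w = finsum_vec TYPE(complex) n (\<lambda>j. c j \<cdot>\<^sub>v b j) I"
    and orth: "\<And>j. j \<in> I \<Longrightarrow> cinner (b j) w = 0"
  shows "w = 0\<^sub>v n"
proof -
  have "(\<lambda>j. c j \<cdot>\<^sub>v b j) \<in> I \<rightarrow> carrier_vec n" using assms(2) by (auto intro!: carrier_vecI)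
  then have "dim_vec w = n" unfolding w by (metis finsum_vec_closed carrier_vecD)
  then have "cinner w (b j) = 0" if "j \<in> I" for j
    using cinner_commute[of w "b j"] orth[OF that] assms(2)[OF that] by simp
  then have "cinner w w = 0"
    using assms(1,2) \<open>dim_vec w = n\<close> by (subst (2) w, subst cinner_finsum_right) auto
  then show ?thesis using cinner_self_eq_0 \<open>dim_vec w = n\<close> by metis
qed

lemma icube_col_in: "icube R n k lam A \<Longrightarrow> j < k \<Longrightarrow> vec_in R n (col A j)"
  unfolding icube_def vec_in_def by auto

lemma is_R_basis_mem: "is_R_basis R n I b L \<Longrightarrow> j \<in> I \<Longrightarrow> b j \<in> L"
  unfolding is_R_basis_def by blast

lemma icube_residual_in_orth_lattice:
  assumes R: "int_or_gaussian R" and A: "icube R n k lam A" and "0 < k"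
    and a: "vec_in R n a"
    and orth_A: "\<And>m. 0 < m \<Longrightarrow> m < k \<Longrightarrow> cinner (col A m) a = 0"
  shows "complex_of_real lam \<cdot>\<^sub>v a - cinner (col A 0) a \<cdot>\<^sub>v col A 0 \<in> orth_lattice R n k A"
proof -
  define L where "L = complex_of_real lam"
  define s where "s = cinner (col A 0) a"
  have a1: "vec_in R n (col A 0)" using icube_col_in[OF A \<open>0 < k\<close>] .
  have A_cols: "cinner (col A m) (col A 0) = (if m = 0 then L else 0)" if "m < k" for m
    using A that \<open>0 < k\<close> unfolding icube_def L_def by auto
  have "L \<in> R" using A_cols[of 0] \<open>0 < k\<close> int_or_gaussian_cinner[OF R a1 a1] by simp
  have "s \<in> R" unfolding s_def using int_or_gaussian_cinner[OF R a1 a] .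
  show ?thesis
    unfolding orth_lattice_def vec_in_def L_def[symmetric] s_def[symmetric]
  proof (intro CollectI conjI allI impI)
    show "dim_vec (L \<cdot>\<^sub>v a - s \<cdot>\<^sub>v col A 0) = n" using a1 unfolding vec_in_def by simp
    fix i assume "i < n"
    then show "(L \<cdot>\<^sub>v a - s \<cdot>\<^sub>v col A 0) $ i \<in> R"
      using a a1 \<open>L \<in> R\<close> \<open>s \<in> R\<close> unfolding vec_in_def
      by (simp add: int_or_gaussian_diff[OF R] int_or_gaussian_mult[OF R])
  next
    fix m assume "m < k"
    then have "vec_in R n (col A m)" by (rule icube_col_in[OF A])
    then show "cinner (col A m) (L \<cdot>\<^sub>v a - s \<cdot>\<^sub>v col A 0) = 0"
      using a a1 A_cols[OF \<open>m < k\<close>] orth_A[OF _ \<open>m < k\<close>] unfolding vec_in_def s_def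
      by (cases "m = 0") (simp_all add: cinner_diff_right cinner_smult_right)
  qed
qed

lemma icube_orth_vector_collinear:
  assumes R: "int_or_gaussian R" and A: "icube R n k lam A" and "0 < k"
    and basis: "is_R_basis R n {k..<n} b (orth_lattice R n k A)"
    and a: "vec_in R n a"
    and orth_A: "\<And>m. 0 < m \<Longrightarrow> m < k \<Longrightarrow> cinner (col A m) a = 0"
    and orth_b: "\<And>j. j \<in> {k..<n} \<Longrightarrow> cinner (b j) a = 0"
  shows "complex_of_real lam \<cdot>\<^sub>v a = cinner (col A 0) a \<cdot>\<^sub>v col A 0"
proof -
  define w where "w = complex_of_real lam \<cdot>\<^sub>v a - cinner (col A 0) a \<cdot>\<^sub>v col A 0"
  have a1: "vec_in R n (col A 0)" using icube_col_in[OF A \<open>0 < k\<close>] .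
  have b: "vec_in R n (b j)" "cinner (col A 0) (b j) = 0" if "j \<in> {k..<n}" for j
    using is_R_basis_mem[OF basis that] \<open>0 < k\<close> unfolding orth_lattice_def by auto
  have "w \<in> orth_lattice R n k A"
    unfolding w_def using icube_residual_in_orth_lattice[OF R A \<open>0 < k\<close> a orth_A] .
  then obtain c where c: "w = finsum_vec TYPE(complex) n (\<lambda>j. c j \<cdot>\<^sub>v b j) {k..<n}"
    using basis unfolding is_R_basis_def by blast
  have "cinner (b j) w = 0" if "j \<in> {k..<n}" for j
  proof -
    have "cinner (b j) (col A 0) = 0"
      using b[OF that] a1 cinner_commute[of "b j" "col A 0"] unfolding vec_in_def by simp
    then show ?thesis
      using b(1)[OF that] a a1 orth_b[OF that] unfolding w_def vec_in_def
      by (simp add: cinner_diff_right cinner_smult_right)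
  qed
  then have "w = 0\<^sub>v n"
    using finsum_vec_orthogonal_eq_0[OF _ _ c] b(1) unfolding vec_in_def by simp
  have "complex_of_real lam * a $ i = cinner (col A 0) a * col A 0 $ i" if "i < n" for i
  proof -
    have "w $ i = 0" using \<open>w = 0\<^sub>v n\<close> that by simp
    then show ?thesis using that a a1 unfolding w_def vec_in_def by simp
  qed
  then show ?thesis using a a1 unfolding vec_in_def by (intro eq_vecI) simp_all
qed

theorem mainTheorem16:
  fixes R :: "complex set" and n k :: nat and lam :: real
    and A0 :: "complex mat" and b :: "nat \<Rightarrow> complex vec"
  assumes hR: "R = rational_integers \<or> R = gaussian_integers"
    and hk: "1 \<le> k" "k < n"
    and hA: "icube R n k lam A0"
    and hprim: "primitive R (col A0 0)"
    and hb: "is_R_basis R n {k..<n} b (orth_lattice R n k A0)"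
  defines "B \<equiv> mat n n (\<lambda>(i, j). if j < k then A0 $$ (i, j) else b j $ i)"
  defines "a \<equiv> vec n (\<lambda>j. cnj ((-1) ^ j * det (mat_delete B j 0)))"
  shows "cnj (det B) / complex_of_real lam \<in> R \<and>
         a = (cnj (det B) / complex_of_real lam) \<cdot>\<^sub>v col A0 0"
proof -
  have R: "int_or_gaussian R" using hR unfolding int_or_gaussian_def .
  have b: "vec_in R n (b j)" if "j \<in> {k..<n}" for j
    using is_R_basis_mem[OF hb that] unfolding orth_lattice_def by simp
  have B: "B \<in> carrier_mat n n" unfolding B_def by simp
  have col_B: "col B j = (if j < k then col A0 j else b j)" if "j < n" for j
    using that hA b[of j] unfolding B_def icube_def vec_in_def by (intro eq_vecI) auto
  have B_in: "B $$ (i, j) \<in> R" if "i < n" "j < n" for i j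
    using that hA b[of j] unfolding B_def icube_def vec_in_def by auto
  have a_cofactors: "a = vec n (\<lambda>i. cnj (cofactor B i 0))"
    unfolding a_def cofactor_def by simp
  have a: "vec_in R n a"
    unfolding a_cofactors vec_in_def
    by (simp add: int_or_gaussian_cnj[OF R] int_or_gaussian_cofactor[OF R B B_in])
  have col_B_a: "cinner (col B m) a = (if m = 0 then cnj (det B) else 0)" if "m < n" for m
    unfolding a_cofactors using cinner_col_conj_cofactors[OF B _ that, of 0] hk by simp
  have "complex_of_real lam \<cdot>\<^sub>v a = cinner (col A0 0) a \<cdot>\<^sub>v col A0 0"
  proof (rule icube_orth_vector_collinear[OF R hA _ hb a])
    show "0 < k" using hk by simp
    show "cinner (col A0 m) a = 0" if "0 < m" "m < k" for m
      using col_B_a[of m] col_B[of m] that hk by simp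
    show "cinner (b j) a = 0" if "j \<in> {k..<n}" for j
      using col_B_a[of j] col_B[of j] that hk by simp
  qed
  moreover have "cinner (col A0 0) a = cnj (det B)" using col_B_a[of 0] col_B[of 0] hk by simp
  ultimately have "complex_of_real lam \<cdot>\<^sub>v a = cnj (det B) \<cdot>\<^sub>v col A0 0" by simp
  moreover have "complex_of_real lam \<noteq> 0" using hA unfolding icube_def by simp
  ultimately show ?thesis
    using primitive_collinear_quotient_mem[OF R hprim icube_col_in[OF hA] a] hk by simp
qed

end
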